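(* Let $S$ be a formula. Then $\mathbb{C}[D]\otimes S$, with the extended products and the operator $D$, satisfies the half Jacobi identity (i.e. is a VLA-SS) if and only if for all homogeneous $u,v,w\in S$ and all $m,n\in\mathbb{N}$ one has, in $\mathbb{C}[D]\otimes S$, $$u_m(v_nw)-\varepsilon_{u,v}v_n(u_mw)=\sum_{i\ge0}\binom{m}{i}(u_iv)_{m+n-i}w .$$
   Context: All spaces over $\mathbb{C}$; $\mathbb{N}=\{0,1,2,\dots\}$; $\varepsilon_{u,v}=(-1)^{|u||v|}$. A formula is a $\mathbb{Z}_2$-graded space $S$ with parity-preserving linear maps $F_n:S\otimes S\to\mathbb{C}[D]\otimes S$ ($n\in\mathbb{N}$; $\mathbb{C}[D]$ even) with $F_n(u,v)=0$ for $n$ large; write $u_nv=F_n(u,v)$, identify $S=1\otimes S$, $D(D^k\otimes u)=D^{k+1}\otimes u$. The products extend uniquely to bilinear products $A_nB$ ($n\in\mathbb{N}$) on $\mathbb{C}[D]\otimes S$ with $(DA)_nB=-nA_{n-1}B$ and $D(A_nB)=(DA)_nB+A_n(DB)$; explicitly $\sum_{n\ge0}(P(D)u)_n(Q(D)v)z^{-n-1}=P(\frac{d}{dz})Q(D-\frac{d}{dz})\sum_{n\ge0}(u_nv)z^{-n-1}$. A VLA-SS is a $\mathbb{Z}_2$-graded space $U$ with an even operator $D$ and bilinear products $u_nv$ ($n\in\mathbb{N}$) such that for homogeneous $u,v,w$: $u_nv=0$ for $n$ large; $|u_nv|=|u|+|v|$; $(Du)_nv=-nu_{n-1}v$ and $D(u_nv)=(Du)_nv+u_n(Dv)$;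 and the half Jacobi identity: for all $k,m,n\in\mathbb{N}$, $\sum_{i\ge0}(-1)^i\binom{k}{i}(u_{m+k-i}(v_{n+i}w)-\varepsilon_{u,v}(-1)^kv_{n+k-i}(u_{m+i}w))=\sum_{i\ge0}\binom{m}{i}(u_{k+i}v)_{m+n-i}w$. *)

theory Defs
  imports Complex_Main "HOL-Library.Function_Algebras"
begin

text \<open>Parity is encoded by bool: False = even, True = odd.
  The sign epsilon_{u,v} = (-1)^{|u||v|}.\<close>

definition eps :: "bool \<Rightarrow> bool \<Rightarrow> complex" where
  "eps p q = (if p \<and> q then -1 else 1)"

definition graded_space ::
  "(complex \<Rightarrow> 'b::ab_group_add \<Rightarrow> 'b) \<Rightarrow> 'b set \<Rightarrow> (bool \<Rightarrow> 'b set) \<Rightarrow> bool" where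
  "graded_space sc U Upar \<longleftrightarrow>
     vector_space sc \<and> module.subspace sc U \<and>
     (\<forall>p. module.subspace sc (Upar p) \<and> Upar p \<subseteq> U) \<and>
     Upar False \<inter> Upar True = {0} \<and>
     (\<forall>x\<in>U. \<exists>a\<in>Upar False. \<exists>b\<in>Upar True. x = a + b)"

definition VLA_SS ::
  "(complex \<Rightarrow> 'b::ab_group_add \<Rightarrow> 'b) \<Rightarrow> 'b set \<Rightarrow> (bool \<Rightarrow> 'b set) \<Rightarrow>
   ('b \<Rightarrow> 'b) \<Rightarrow> ('b \<Rightarrow> nat \<Rightarrow> 'b \<Rightarrow> 'b) \<Rightarrow> bool" where
  "VLA_SS sc U Upar D pr \<longleftrightarrow>
     graded_space sc U Upar \<and>
     \<comment> \<open>D is an even linear operator on U\<close>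
     (\<forall>x\<in>U. \<forall>y\<in>U. D (x + y) = D x + D y) \<and>
     (\<forall>c. \<forall>x\<in>U. D (sc c x) = sc c (D x)) \<and>
     (\<forall>p. \<forall>x\<in>Upar p. D x \<in> Upar p) \<and>
     \<comment> \<open>the products are bilinear maps U x U -> U\<close>
     (\<forall>n. \<forall>x\<in>U. \<forall>y\<in>U. pr x n y \<in> U) \<and>
     (\<forall>n. \<forall>x\<in>U. \<forall>x'\<in>U. \<forall>y\<in>U. pr (x + x') n y = pr x n y + pr x' n y) \<and>
     (\<forall>n. \<forall>x\<in>U. \<forall>y\<in>U. \<forall>y'\<in>U. pr x n (y + y') = pr x n y + pr x n y') \<and>
     (\<forall>n c. \<forall>x\<in>U. \<forall>y\<in>U. pr (sc c x) n y = sc c (pr x n y)) \<and>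
     (\<forall>n c. \<forall>x\<in>U. \<forall>y\<in>U. pr x n (sc c y) = sc c (pr x n y)) \<and>
     \<comment> \<open>axioms for homogeneous elements\<close>
     (\<forall>p q r. \<forall>u\<in>Upar p. \<forall>v\<in>Upar q. \<forall>w\<in>Upar r.
        (\<exists>N. \<forall>n\<ge>N. pr u n v = 0) \<and>
        (\<forall>n. pr u n v \<in> Upar (p \<noteq> q)) \<and>
        (\<forall>n. pr (D u) n v = sc (- of_nat n) (pr u (n - 1) v)) \<and>
        (\<forall>n. D (pr u n v) = pr (D u) n v + pr u n (D v)) \<and>
        (\<forall>k m n.
           (\<Sum>i\<le>k. sc ((-1) ^ i * of_nat (k choose i))
              (pr u (m + k - i) (pr v (n + i) w)
               - sc (eps p q * (-1) ^ k) (pr v (n + k - i) (pr u (m + i) w))))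
           = (\<Sum>i\<le>m. sc (of_nat (m choose i)) (pr (pr u (k + i) v) (m + n - i) w))))"

text \<open>The space C[D] (x) S is modelled as finitely supported sequences f :: nat => 'a,
  where f k is the coefficient of D^k.\<close>

definition CDS :: "(nat \<Rightarrow> 'a::zero) set" where
  "CDS = {f. finite {k. f k \<noteq> 0}}"

definition CDpar :: "(bool \<Rightarrow> 'a::zero set) \<Rightarrow> bool \<Rightarrow> (nat \<Rightarrow> 'a) set" where
  "CDpar Spar p = {f \<in> CDS. \<forall>k. f k \<in> Spar p}"

definition Dsh :: "(nat \<Rightarrow> 'a::zero) \<Rightarrow> nat \<Rightarrow> 'a" where
  "Dsh f = (\<lambda>j. if j = 0 then 0 else f (j - 1))"

definition Dpow :: "nat \<Rightarrow> (nat \<Rightarrow> 'a::zero) \<Rightarrow> nat \<Rightarrow> 'a" where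
  "Dpow k f = (\<lambda>j. if k \<le> j then f (j - k) else 0)"

definition incl :: "'a::zero \<Rightarrow> nat \<Rightarrow> 'a" where
  "incl u = (\<lambda>j. if j = 0 then u else 0)"

definition fscale :: "(complex \<Rightarrow> 'a \<Rightarrow> 'a) \<Rightarrow> complex \<Rightarrow> (nat \<Rightarrow> 'a) \<Rightarrow> nat \<Rightarrow> 'a" where
  "fscale sc c f = (\<lambda>j. sc c (f j))"

definition is_formula ::
  "(complex \<Rightarrow> 'a::ab_group_add \<Rightarrow> 'a) \<Rightarrow> (bool \<Rightarrow> 'a set) \<Rightarrow>
   (nat \<Rightarrow> 'a \<Rightarrow> 'a \<Rightarrow> nat \<Rightarrow> 'a) \<Rightarrow> bool" where
  "is_formula sc Spar F \<longleftrightarrow>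
     graded_space sc UNIV Spar \<and>
     (\<forall>n u v. F n u v \<in> CDS) \<and>
     (\<forall>n u u' v. F n (u + u') v = F n u v + F n u' v) \<and>
     (\<forall>n u v v'. F n u (v + v') = F n u v + F n u v') \<and>
     (\<forall>n c u v. F n (sc c u) v = fscale sc c (F n u v)) \<and>
     (\<forall>n c u v. F n u (sc c v) = fscale sc c (F n u v)) \<and>
     (\<forall>p q n. \<forall>u\<in>Spar p. \<forall>v\<in>Spar q. F n u v \<in> CDpar Spar (p \<noteq> q)) \<and>
     (\<forall>u v. \<exists>N. \<forall>n\<ge>N. F n u v = 0)"

text \<open>(D^a u)_n (D^b v): coefficient of z^{-n-1} in
  (d/dz)^a (D - d/dz)^b sum_j (u_j v) z^{-j-1}, i.e.
  sum_s (-1)^a (b choose s) (a+s)! (n choose a+s) D^{b-s} (u_{n-a-s} v).\<close>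

definition ext_basic ::
  "(complex \<Rightarrow> 'a::ab_group_add \<Rightarrow> 'a) \<Rightarrow> (nat \<Rightarrow> 'a \<Rightarrow> 'a \<Rightarrow> nat \<Rightarrow> 'a) \<Rightarrow>
   nat \<Rightarrow> 'a \<Rightarrow> nat \<Rightarrow> nat \<Rightarrow> 'a \<Rightarrow> nat \<Rightarrow> 'a" where
  "ext_basic sc F a u n b v =
     (\<Sum>s\<le>b. if a + s \<le> n then
        fscale sc ((-1) ^ a * of_nat (b choose s) * fact (a + s) * of_nat (n choose (a + s)))
          (Dpow (b - s) (F (n - a - s) u v))
      else 0)"

definition ext_prod ::
  "(complex \<Rightarrow> 'a::ab_group_add \<Rightarrow> 'a) \<Rightarrow> (nat \<Rightarrow> 'a \<Rightarrow> 'a \<Rightarrow> nat \<Rightarrow> 'a) \<Rightarrow>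
   (nat \<Rightarrow> 'a) \<Rightarrow> nat \<Rightarrow> (nat \<Rightarrow> 'a) \<Rightarrow> nat \<Rightarrow> 'a" where
  "ext_prod sc F A n B =
     (\<Sum>a\<in>{a. A a \<noteq> 0}. \<Sum>b\<in>{b. B b \<noteq> 0}. ext_basic sc F a (A a) n b (B b))"

end

theory Submission
  imports Defs
begin

text \<open>The extended products are bilinear and satisfy \<open>(DA)\<^sub>nB = -n A\<^sub>n\<^sub>-\<^sub>1B\<close> and the
  Leibniz rule for \<open>D\<close>. Hence the Jacobi defect
  \<open>J(A,B,C)\<^sub>m\<^sub>,\<^sub>n = A\<^sub>m(B\<^sub>nC) - \<epsilon> B\<^sub>n(A\<^sub>mC) - \<Sum>\<^sub>i (m choose i) (A\<^sub>iB)\<^sub>m\<^sub>+\<^sub>n\<^sub>-\<^sub>iC\<close> is trilinear,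
  and replacing an argument by its image under \<open>D\<close> expresses the new defect through the old
  one at shifted indices. So if \<open>J\<close> vanishes on \<open>S\<close>, it vanishes on all of \<open>\<complex>[D] \<otimes> S\<close>,
  every element being a sum of terms \<open>D\<^sup>k u\<close>. Finally, the half Jacobi identity for \<open>k + 1\<close>
  is the difference of those for \<open>k\<close> at \<open>(m + 1, n)\<close> and \<open>(m, n + 1)\<close> (Pascal's rule on both
  sides), so its case \<open>k = 0\<close>, which says \<open>J = 0\<close>, implies all the others.\<close>

context vector_space
begin

lemma sum_binomial_Suc_split:
  "(\<Sum>s\<le>Suc b. of_nat (Suc b choose s) *s g s) =
   (\<Sum>s\<le>b. of_nat (b choose s) *s g s) + (\<Sum>s\<le>b. of_nat (b choose s) *s g (Suc s))"
proof -
  have shift: "(\<Sum>s\<le>b. of_nat (b choose s) *s g s) =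
      g 0 + (\<Sum>s\<le>b. of_nat (b choose Suc s) *s g (Suc s))"
  proof -
    have "(\<Sum>s\<le>b. of_nat (b choose s) *s g s) = g 0 + (\<Sum>s<b. of_nat (b choose Suc s) *s g (Suc s))"
      unfolding lessThan_Suc_atMost[symmetric] sum.lessThan_Suc_shift by simp
    also have "(\<Sum>s<b. of_nat (b choose Suc s) *s g (Suc s)) =
        (\<Sum>s\<le>b. of_nat (b choose Suc s) *s g (Suc s))"
      by (simp add: lessThan_Suc_atMost[symmetric] binomial_eq_0)
    finally show ?thesis .
  qed
  have "(\<Sum>s\<le>Suc b. of_nat (Suc b choose s) *s g s) =
      g 0 + (\<Sum>s\<le>b. of_nat (Suc b choose Suc s) *s g (Suc s))"
    by (simp only: sum.atMost_Suc_shift) simp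
  also have "\<dots> = (g 0 + (\<Sum>s\<le>b. of_nat (b choose Suc s) *s g (Suc s)))
      + (\<Sum>s\<le>b. of_nat (b choose s) *s g (Suc s))"
    by (simp add: sum.distrib scale_left_distrib algebra_simps)
  finally show ?thesis by (simp only: shift)
qed

lemma sum_binomial_times_index:
  "(\<Sum>i\<le>m. (of_nat (m choose i) * of_nat i) *s G i) =
   of_nat m *s (\<Sum>j\<le>m - 1. of_nat (m - 1 choose j) *s G (Suc j))"
proof (cases m)
  case (Suc m')
  have "(of_nat (Suc m' choose Suc j) * of_nat (Suc j) :: 'a) = of_nat (Suc m') * of_nat (m' choose j)"
    for j
    by (simp only: of_nat_mult[symmetric] Suc_times_binomial_eq)
  then show ?thesis
    unfolding Suc by (simp only: sum.atMost_Suc_shift) (simp add: scale_sum_right)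
qed simp

lemma sum_binomial_times_sum_index:
  "(\<Sum>i\<le>m. (of_nat (m choose i) * of_nat (m + n - i)) *s Y i (m + n - 1 - i)) =
   of_nat m *s (\<Sum>j\<le>m - 1. of_nat (m - 1 choose j) *s Y j (m - 1 + n - j))
   + of_nat n *s (\<Sum>i\<le>m. of_nat (m choose i) *s Y i (m + n - 1 - i))"
proof -
  have coeff: "(m choose i) * (m + n - i) = m * (m - 1 choose i) + n * (m choose i)" if "i \<le> m" for i
  proof -
    have "(m choose i) * (m + n - i) = (m - i) * (m choose i) + n * (m choose i)"
      using that by (simp add: algebra_simps)
    then show ?thesis by (simp only: binomial_absorb_comp)
  qed
  \<comment> \<open>the term \<open>j = m\<close> added below vanishes because \<open>m - 1 choose m = 0\<close>\<close>
  have "of_nat m *s (\<Sum>j\<le>m - 1. of_nat (m - 1 choose j) *s Y j (m - 1 + n - j)) =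
      (\<Sum>j\<le>m. (of_nat m * of_nat (m - 1 choose j)) *s Y j (m + n - 1 - j))"
    by (cases m) (simp_all add: scale_sum_right binomial_eq_0)
  moreover have "of_nat n *s (\<Sum>i\<le>m. of_nat (m choose i) *s Y i (m + n - 1 - i)) =
      (\<Sum>i\<le>m. (of_nat n * of_nat (m choose i)) *s Y i (m + n - 1 - i))"
    by (simp add: scale_sum_right)
  moreover have "(of_nat (m choose i) * of_nat (m + n - i) :: 'a) =
      of_nat m * of_nat (m - 1 choose i) + of_nat n * of_nat (m choose i)" if "i \<le> m" for i
    using coeff[OF that] by (metis of_nat_add of_nat_mult)
  ultimately show ?thesis
    by (simp add: sum.distrib[symmetric] scale_left_distrib[symmetric])
qed

lemma alternating_binomial_sum_Suc:
  "(\<Sum>i\<le>Suc k. ((-1) ^ i * of_nat (Suc k choose i)) *s X (m + Suc k - i) (n + i)) =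
   (\<Sum>i\<le>k. ((-1) ^ i * of_nat (k choose i)) *s X (Suc m + k - i) (n + i))
   - (\<Sum>i\<le>k. ((-1) ^ i * of_nat (k choose i)) *s X (m + k - i) (Suc n + i))"
proof -
  have "(\<Sum>i\<le>Suc k. ((-1) ^ i * of_nat (Suc k choose i)) *s X (m + Suc k - i) (n + i)) =
      (\<Sum>i\<le>Suc k. of_nat (Suc k choose i) *s ((-1) ^ i *s X (m + Suc k - i) (n + i)))"
    by (simp add: mult.commute)
  also have "\<dots> = (\<Sum>i\<le>k. of_nat (k choose i) *s ((-1) ^ i *s X (m + Suc k - i) (n + i)))
      + (\<Sum>i\<le>k. of_nat (k choose i) *s ((-1) ^ Suc i *s X (m + Suc k - Suc i) (n + Suc i)))"
    by (rule sum_binomial_Suc_split)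
  also have "(\<Sum>i\<le>k. of_nat (k choose i) *s ((-1) ^ i *s X (m + Suc k - i) (n + i))) =
      (\<Sum>i\<le>k. ((-1) ^ i * of_nat (k choose i)) *s X (Suc m + k - i) (n + i))"
    by (rule sum.cong) (simp_all add: mult.commute)
  also have "(\<Sum>i\<le>k. of_nat (k choose i) *s ((-1) ^ Suc i *s X (m + Suc k - Suc i) (n + Suc i))) =
      - (\<Sum>i\<le>k. ((-1) ^ i * of_nat (k choose i)) *s X (m + k - i) (Suc n + i))"
    unfolding sum_negf[symmetric] by (rule sum.cong) (simp_all add: mult.commute)
  finally show ?thesis by simp
qed

lemma binomial_sum_Suc:
  "(\<Sum>i\<le>m. of_nat (m choose i) *s Z (Suc k + i) (m + n - i)) =
   (\<Sum>i\<le>Suc m. of_nat (Suc m choose i) *s Z (k + i) (Suc m + n - i))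
   - (\<Sum>i\<le>m. of_nat (m choose i) *s Z (k + i) (m + Suc n - i))"
proof -
  have "(\<Sum>i\<le>Suc m. of_nat (Suc m choose i) *s Z (k + i) (Suc m + n - i)) =
      (\<Sum>i\<le>m. of_nat (m choose i) *s Z (k + i) (Suc m + n - i))
      + (\<Sum>i\<le>m. of_nat (m choose i) *s Z (k + Suc i) (Suc m + n - Suc i))"
    by (rule sum_binomial_Suc_split)
  also have "(\<Sum>i\<le>m. of_nat (m choose i) *s Z (k + i) (Suc m + n - i)) =
      (\<Sum>i\<le>m. of_nat (m choose i) *s Z (k + i) (m + Suc n - i))"
    by (rule sum.cong) simp_all
  also have "(\<Sum>i\<le>m. of_nat (m choose i) *s Z (k + Suc i) (Suc m + n - Suc i)) =
      (\<Sum>i\<le>m. of_nat (m choose i) *s Z (Suc k + i) (m + n - i))"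
    by (rule sum.cong) simp_all
  finally show ?thesis by simp
qed

text \<open>\<open>X m n\<close>, \<open>Y n m\<close> and \<open>Z k j\<close> stand for \<open>u\<^sub>m(v\<^sub>nw)\<close>, \<open>v\<^sub>n(u\<^sub>mw)\<close> and \<open>(u\<^sub>kv)\<^sub>jw\<close>.\<close>

lemma half_jacobi_from_base_case:
  assumes base: "\<And>m n. X m n - e *s Y n m = (\<Sum>i\<le>m. of_nat (m choose i) *s Z i (m + n - i))"
  shows "(\<Sum>i\<le>k. ((-1) ^ i * of_nat (k choose i)) *s
            (X (m + k - i) (n + i) - (e * (-1) ^ k) *s Y (n + k - i) (m + i)))
         = (\<Sum>i\<le>m. of_nat (m choose i) *s Z (k + i) (m + n - i))"
proof -
  have "(\<Sum>i\<le>k. ((-1) ^ i * of_nat (k choose i)) *s X (m + k - i) (n + i))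
      - (e * (-1) ^ k) *s (\<Sum>i\<le>k. ((-1) ^ i * of_nat (k choose i)) *s Y (n + k - i) (m + i))
      = (\<Sum>i\<le>m. of_nat (m choose i) *s Z (k + i) (m + n - i))"
  proof (induction k arbitrary: m n)
    case 0
    show ?case using base by (simp add: scale_one)
  next
    case (Suc k)
    show ?case
      unfolding alternating_binomial_sum_Suc binomial_sum_Suc
        Suc.IH[of "Suc m" n, symmetric] Suc.IH[of m "Suc n", symmetric]
      by (simp add: algebra_simps)
  qed
  then show ?thesis
    by (simp add: scale_right_diff_distrib sum_subtractf scale_sum_right mult_ac)
qed

end
lemma sum_fun_apply: "(\<Sum>x\<in>A. f x) (j :: nat) = (\<Sum>x\<in>A. f x j)"
  by (induction A rule: infinite_finite_induct) auto

lemma fact_Suc_times_binomial_Suc: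
  "(fact (Suc k) :: 'a::semiring_char_0) * of_nat (Suc n choose Suc k) =
   of_nat (Suc n) * (fact k * of_nat (n choose k))"
proof -
  have "fact (Suc k) * (Suc n choose Suc k) = Suc n * (fact k * (n choose k))"
    using Suc_times_binomial_eq[of n k] by (simp add: algebra_simps)
  then show ?thesis by (metis of_nat_fact of_nat_mult)
qed

lemma Dsh_add [simp]: "Dsh (f + g :: nat \<Rightarrow> 'a::ab_group_add) = Dsh f + Dsh g"
  by (simp add: Dsh_def fun_eq_iff)

lemma Dsh_diff [simp]: "Dsh (f - g :: nat \<Rightarrow> 'a::ab_group_add) = Dsh f - Dsh g"
  by (simp add: Dsh_def fun_eq_iff)

lemma Dsh_zero [simp]: "Dsh 0 = 0"
  by (simp add: Dsh_def fun_eq_iff)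

lemma Dsh_sum: "Dsh (\<Sum>x\<in>A. f x :: nat \<Rightarrow> 'a::ab_group_add) = (\<Sum>x\<in>A. Dsh (f x))"
proof (induction A rule: infinite_finite_induct)
  case (infinite A)
  show ?case by (simp only: sum.infinite[OF infinite] Dsh_zero)
next
  case (insert x A)
  then show ?case by (simp only: sum.insert[OF insert(1,2)] Dsh_add)
qed (simp only: sum.empty Dsh_zero)

lemma Dpow_add [simp]: "Dpow k (f + g :: nat \<Rightarrow> 'a::ab_group_add) = Dpow k f + Dpow k g"
  by (simp add: Dpow_def fun_eq_iff)

lemma Dpow_zero [simp]: "Dpow k 0 = 0"
  by (simp add: Dpow_def fun_eq_iff)

lemma Dpow_0 [simp]: "Dpow 0 f = f"
  by (simp add: Dpow_def)

lemma Dpow_Suc: "Dpow (Suc k) f = Dsh (Dpow k f)"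
  by (auto simp add: Dpow_def Dsh_def fun_eq_iff)

lemma Dpow_incl: "Dpow a (incl u) = (\<lambda>j. if j = a then u else 0)"
  by (auto simp add: Dpow_def incl_def fun_eq_iff)

lemma CDS_finite_support: "f \<in> CDS \<Longrightarrow> finite {k. f k \<noteq> 0}"
  by (simp add: CDS_def)

lemma CDS_zero [simp]: "0 \<in> CDS"
  by (simp add: CDS_def)

lemma CDS_add [simp]: "f \<in> CDS \<Longrightarrow> g \<in> CDS \<Longrightarrow> f + g \<in> CDS"
  for f g :: "nat \<Rightarrow> 'a::ab_group_add"
  unfolding CDS_def by (auto intro: finite_subset[of _ "{k. f k \<noteq> 0} \<union> {k. g k \<noteq> 0}"])

lemma CDS_sum [simp]: "(\<And>x. x \<in> A \<Longrightarrow> f x \<in> CDS) \<Longrightarrow> (\<Sum>x\<in>A. f x :: nat \<Rightarrow> 'a::ab_group_add) \<in> CDS"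
  by (induction A rule: infinite_finite_induct) auto

lemma CDS_Dsh [simp]: "f \<in> CDS \<Longrightarrow> Dsh f \<in> CDS"
proof -
  assume "f \<in> CDS"
  then have "finite (Suc ` {k. f k \<noteq> 0})" by (simp add: CDS_def)
  moreover have "{k. Dsh f k \<noteq> 0} \<subseteq> Suc ` {k. f k \<noteq> 0}"
    by (auto simp: Dsh_def image_iff) (metis Suc_pred)
  ultimately show ?thesis unfolding CDS_def using finite_subset by blast
qed

lemma CDS_Dpow [simp]: "f \<in> CDS \<Longrightarrow> Dpow k f \<in> CDS"
  by (induction k) (auto simp: Dpow_Suc)

lemma CDS_incl [simp]: "incl u \<in> CDS"
  unfolding CDS_def incl_def by (auto intro: finite_subset[of _ "{0}"])

lemma CDS_eq_sum_Dpow_incl: "A \<in> CDS \<Longrightarrow> A = (\<Sum>a\<in>{k. A k \<noteq> 0}. Dpow a (incl (A a)))"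
  for A :: "nat \<Rightarrow> 'a::ab_group_add"
  by (rule ext) (simp add: sum_fun_apply Dpow_incl CDS_finite_support)

lemma additive_on_CDS_sum:
  fixes f :: "(nat \<Rightarrow> 'a::ab_group_add) \<Rightarrow> 'b::comm_monoid_add"
  assumes zero: "f 0 = 0"
    and add: "\<And>x y. x \<in> CDS \<Longrightarrow> y \<in> CDS \<Longrightarrow> f (x + y) = f x + f y"
    and X: "\<And>a. a \<in> T \<Longrightarrow> X a \<in> CDS"
  shows "f (\<Sum>a\<in>T. X a) = (\<Sum>a\<in>T. f (X a))"
  using X
proof (induction T rule: infinite_finite_induct)
  case (insert x T)
  then have "X x \<in> CDS" "(\<Sum>a\<in>T. X a) \<in> CDS" "f (\<Sum>a\<in>T. X a) = (\<Sum>a\<in>T. f (X a))"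
    by simp_all
  then show ?case by (simp only: sum.insert[OF insert(1,2)] add)
qed (simp_all add: zero)
lemma additive_on_CDS_eq_0:
  fixes f :: "(nat \<Rightarrow> 'a::ab_group_add) \<Rightarrow> 'b::comm_monoid_add"
  assumes "f 0 = 0"
    and "\<And>x y. x \<in> CDS \<Longrightarrow> y \<in> CDS \<Longrightarrow> f (x + y) = f x + f y"
    and A: "A \<in> CDS"
    and "\<And>a. f (Dpow a (incl (A a))) = 0"
  shows "f A = 0"
proof -
  have "f A = f (\<Sum>a\<in>{k. A k \<noteq> 0}. Dpow a (incl (A a)))"
    using CDS_eq_sum_Dpow_incl[OF A] by (rule arg_cong)
  also have "\<dots> = (\<Sum>a\<in>{k. A k \<noteq> 0}. f (Dpow a (incl (A a))))"
    by (rule additive_on_CDS_sum[OF assms(1,2)]) simp_all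
  finally show ?thesis by (simp add: assms)
qed

locale formula =
  fixes sc :: "complex \<Rightarrow> 'a::ab_group_add \<Rightarrow> 'a"
    and Spar :: "bool \<Rightarrow> 'a set"
    and F :: "nat \<Rightarrow> 'a \<Rightarrow> 'a \<Rightarrow> nat \<Rightarrow> 'a"
  assumes formula: "is_formula sc Spar F"
begin

abbreviation pr :: "(nat \<Rightarrow> 'a) \<Rightarrow> nat \<Rightarrow> (nat \<Rightarrow> 'a) \<Rightarrow> nat \<Rightarrow> 'a"
  where "pr \<equiv> ext_prod sc F"

abbreviation sm :: "complex \<Rightarrow> (nat \<Rightarrow> 'a) \<Rightarrow> nat \<Rightarrow> 'a"
  where "sm \<equiv> fscale sc"

sublocale S: vector_space sc
  using formula by (simp add: is_formula_def graded_space_def)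

sublocale V: vector_space sm
  unfolding vector_space_def fscale_def
  by (simp add: fun_eq_iff S.scale_right_distrib S.scale_left_distrib)

lemma Spar_subspace: "S.subspace (Spar p)"
  using formula by (simp add: is_formula_def graded_space_def)

lemma Spar_zero [simp]: "0 \<in> Spar p"
  using Spar_subspace by (simp add: S.subspace_def)

lemma Spar_add [simp]: "x \<in> Spar p \<Longrightarrow> y \<in> Spar p \<Longrightarrow> x + y \<in> Spar p"
  using Spar_subspace by (simp add: S.subspace_def)

lemma Spar_scale [simp]: "x \<in> Spar p \<Longrightarrow> sc c x \<in> Spar p"
  using Spar_subspace by (simp add: S.subspace_def)

lemma F_CDS [simp]: "F n u v \<in> CDS"
  using formula by (simp add: is_formula_def)

lemma F_add_left: "F n (u + u') v = F n u v + F n u' v"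
  using formula by (simp add: is_formula_def)

lemma F_add_right: "F n u (v + v') = F n u v + F n u v'"
  using formula by (simp add: is_formula_def)

lemma F_scale_left: "F n (sc c u) v = sm c (F n u v)"
  using formula by (simp add: is_formula_def)

lemma F_scale_right: "F n u (sc c v) = sm c (F n u v)"
  using formula by (simp add: is_formula_def)

lemma F_CDpar: "u \<in> Spar p \<Longrightarrow> v \<in> Spar q \<Longrightarrow> F n u v \<in> CDpar Spar (p \<noteq> q)"
  using formula by (simp add: is_formula_def)

lemma F_eventually_zero: "\<exists>N. \<forall>n\<ge>N. F n u v = 0"
  using formula by (simp add: is_formula_def)

lemma F_zero_left [simp]: "F n 0 v = 0"
  using F_add_left[of n 0 0 v] by simp

lemma F_zero_right [simp]: "F n u 0 = 0"
  using F_add_right[of n u 0 0] by simp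

lemma fscale_apply: "sm c f j = sc c (f j)"
  by (simp add: fscale_def)

lemma Dsh_fscale [simp]: "Dsh (sm c f) = sm c (Dsh f)"
  by (simp add: Dsh_def fun_eq_iff fscale_def)

lemma Dpow_fscale [simp]: "Dpow k (sm c f) = sm c (Dpow k f)"
  by (simp add: Dpow_def fun_eq_iff fscale_def)

lemma CDS_fscale [simp]: "f \<in> CDS \<Longrightarrow> sm c f \<in> CDS"
  unfolding CDS_def by (auto simp: fscale_def intro: finite_subset[of _ "{k. f k \<noteq> 0}"])

lemma CDpar_add [simp]: "f \<in> CDpar Spar p \<Longrightarrow> g \<in> CDpar Spar p \<Longrightarrow> f + g \<in> CDpar Spar p"
  by (simp add: CDpar_def)

lemma CDpar_zero [simp]: "0 \<in> CDpar Spar p"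
  by (simp add: CDpar_def)

lemma CDpar_fscale [simp]: "f \<in> CDpar Spar p \<Longrightarrow> sm c f \<in> CDpar Spar p"
  by (simp add: CDpar_def) (simp add: fscale_def)

lemma CDpar_sum [simp]: "(\<And>x. x \<in> A \<Longrightarrow> f x \<in> CDpar Spar p) \<Longrightarrow> (\<Sum>x\<in>A. f x) \<in> CDpar Spar p"
  by (induction A rule: infinite_finite_induct) auto

lemma CDpar_Dsh [simp]: "f \<in> CDpar Spar p \<Longrightarrow> Dsh f \<in> CDpar Spar p"
  by (simp add: CDpar_def) (simp add: Dsh_def)

lemma CDpar_Dpow [simp]: "f \<in> CDpar Spar p \<Longrightarrow> Dpow k f \<in> CDpar Spar p"
  by (induction k) (auto simp: Dpow_Suc)

lemma CDpar_incl [simp]: "u \<in> Spar p \<Longrightarrow> incl u \<in> CDpar Spar p"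
  by (simp add: CDpar_def) (simp add: incl_def)

lemma CDS_decompose_parity:
  assumes x: "x \<in> CDS"
  shows "\<exists>a\<in>CDpar Spar False. \<exists>b\<in>CDpar Spar True. x = a + b"
proof -
  have "\<exists>a\<in>Spar False. \<exists>b\<in>Spar True. y = a + b" for y
    using formula by (simp add: is_formula_def graded_space_def)
  then have "\<exists>a. a \<in> Spar False \<and> y - a \<in> Spar True" for y
    by (metis add_diff_cancel_left')
  then obtain ev where ev: "\<And>y. ev y \<in> Spar False \<and> y - ev y \<in> Spar True"
    by metis
  \<comment> \<open>\<open>ev 0\<close> need not be \<open>0\<close>, so the support is kept by hand\<close>
  define a where "a k = (if x k = 0 then 0 else ev (x k))" for k
  have "finite {k. x k \<noteq> 0}"
    using x by (rule CDS_finite_support)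
  moreover have "{k. a k \<noteq> 0} \<subseteq> {k. x k \<noteq> 0}" and "{k. (x - a) k \<noteq> 0} \<subseteq> {k. x k \<noteq> 0}"
    by (auto simp: a_def)
  ultimately have "a \<in> CDS" "x - a \<in> CDS"
    unfolding CDS_def by (auto intro: finite_subset)
  moreover have "a k \<in> Spar False" "(x - a) k \<in> Spar True" for k
    using ev[of "x k"] by (simp_all add: a_def)
  ultimately have "a \<in> CDpar Spar False" "x - a \<in> CDpar Spar True"
    by (simp_all add: CDpar_def)
  then show ?thesis by force
qed

lemma graded_space_CDS: "graded_space sm CDS (CDpar Spar)"
proof -
  have "CDpar Spar False \<inter> CDpar Spar True \<subseteq> {0}"
  proof
    fix f assume "f \<in> CDpar Spar False \<inter> CDpar Spar True"
    then have "f k \<in> Spar False \<inter> Spar True" for k by (auto simp: CDpar_def)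
    moreover have "Spar False \<inter> Spar True = {0}"
      using formula by (simp add: is_formula_def graded_space_def)
    ultimately show "f \<in> {0}" by (auto simp: fun_eq_iff)
  qed
  moreover have "V.subspace CDS" "V.subspace (CDpar Spar p)" for p
    by (simp_all add: V.subspace_def)
  ultimately show ?thesis
    unfolding graded_space_def
    using V.vector_space_axioms CDS_decompose_parity by (auto simp: CDpar_def)
qed

definition ext_basic_term :: "nat \<Rightarrow> 'a \<Rightarrow> nat \<Rightarrow> 'a \<Rightarrow> nat \<Rightarrow> nat \<Rightarrow> nat \<Rightarrow> 'a" where
  "ext_basic_term a u n v d s =
     (if a + s \<le> n then sm ((-1) ^ a * fact (a + s) * of_nat (n choose (a + s))) (Dpow d (F (n - a - s) u v))
      else 0)"

lemma ext_basic_eq_sum_term: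
  "ext_basic sc F a u n b v = (\<Sum>s\<le>b. sm (of_nat (b choose s)) (ext_basic_term a u n v (b - s) s))"
  unfolding ext_basic_def ext_basic_term_def
  by (rule sum.cong) (auto simp: V.scale_scale mult_ac)

lemma ext_basic_term_Suc_power: "ext_basic_term a u n v (Suc d) s = Dsh (ext_basic_term a u n v d s)"
  by (simp add: ext_basic_term_def Dpow_Suc)

lemma ext_basic_term_Suc_left:
  "ext_basic_term (Suc a) u n v d s = sm (- of_nat n) (ext_basic_term a u (n - 1) v d s)"
proof (cases n)
  case (Suc n')
  have "((-1) ^ Suc a * fact (Suc a + s) * of_nat (Suc n' choose (Suc a + s)) :: complex)
      = - of_nat (Suc n') * ((-1) ^ a * fact (a + s) * of_nat (n' choose (a + s)))"
    unfolding mult.assoc add_Suc fact_Suc_times_binomial_Suc by (simp add: algebra_simps)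
  then show ?thesis
    using Suc by (simp add: ext_basic_term_def V.scale_scale)
qed (simp add: ext_basic_term_def)

lemma ext_basic_term_Suc_index: "ext_basic_term a u n v d (Suc s) = - ext_basic_term (Suc a) u n v d s"
  by (simp add: ext_basic_term_def V.scale_minus_left[symmetric] del: V.scale_minus_left)

lemma ext_basic_Suc_left:
  "ext_basic sc F (Suc a) u n b v = sm (- of_nat n) (ext_basic sc F a u (n - 1) b v)"
  by (simp add: ext_basic_eq_sum_term ext_basic_term_Suc_left V.scale_sum_right
      V.scale_left_commute[of _ "- of_nat n"])
    (simp add: mult.commute)

lemma Dsh_ext_basic:
  "Dsh (ext_basic sc F a u n b v) = ext_basic sc F (Suc a) u n b v + ext_basic sc F a u n (Suc b) v"
proof -
  let ?t = "ext_basic_term a u n v"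
  have "ext_basic sc F a u n (Suc b) v = (\<Sum>s\<le>Suc b. sm (of_nat (Suc b choose s)) (?t (Suc b - s) s))"
    by (rule ext_basic_eq_sum_term)
  also have "\<dots> = (\<Sum>s\<le>b. sm (of_nat (b choose s)) (?t (Suc b - s) s))
     + (\<Sum>s\<le>b. sm (of_nat (b choose s)) (?t (Suc b - Suc s) (Suc s)))"
    by (rule V.sum_binomial_Suc_split)
  also have "(\<Sum>s\<le>b. sm (of_nat (b choose s)) (?t (Suc b - s) s)) = Dsh (ext_basic sc F a u n b v)"
    unfolding ext_basic_eq_sum_term Dsh_sum
    by (rule sum.cong) (auto simp: Suc_diff_le ext_basic_term_Suc_power)
  also have "(\<Sum>s\<le>b. sm (of_nat (b choose s)) (?t (Suc b - Suc s) (Suc s))) = - ext_basic sc F (Suc a) u n b v"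
    unfolding ext_basic_eq_sum_term sum_negf[symmetric]
    by (rule sum.cong) (auto simp: ext_basic_term_Suc_index)
  finally show ?thesis by (metis add.commute diff_add_cancel diff_conv_add_uminus)
qed

lemma ext_basic_zero_left [simp]: "ext_basic sc F a 0 n b v = 0"
  unfolding ext_basic_def by (simp only: F_zero_left Dpow_zero V.scale_zero_right if_cancel sum.neutral_const)

lemma ext_basic_zero_right [simp]: "ext_basic sc F a u n b 0 = 0"
  unfolding ext_basic_def by (simp only: F_zero_right Dpow_zero V.scale_zero_right if_cancel sum.neutral_const)

lemma ext_basic_add_left:
  "ext_basic sc F a (u + u') n b v = ext_basic sc F a u n b v + ext_basic sc F a u' n b v"
  unfolding ext_basic_def sum.distrib[symmetric]
  by (rule sum.cong) (auto simp: F_add_left V.scale_right_distrib)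

lemma ext_basic_add_right:
  "ext_basic sc F a u n b (v + v') = ext_basic sc F a u n b v + ext_basic sc F a u n b v'"
  unfolding ext_basic_def sum.distrib[symmetric]
  by (rule sum.cong) (auto simp: F_add_right V.scale_right_distrib)

lemma ext_basic_scale_left: "ext_basic sc F a (sc c u) n b v = sm c (ext_basic sc F a u n b v)"
  unfolding ext_basic_def V.scale_sum_right
  by (rule sum.cong) (auto simp: F_scale_left V.scale_left_commute[of c])

lemma ext_basic_scale_right: "ext_basic sc F a u n b (sc c v) = sm c (ext_basic sc F a u n b v)"
  unfolding ext_basic_def V.scale_sum_right
  by (rule sum.cong) (auto simp: F_scale_right V.scale_left_commute[of c])

lemma ext_basic_CDpar:
  "u \<in> Spar p \<Longrightarrow> v \<in> Spar q \<Longrightarrow> ext_basic sc F a u n b v \<in> CDpar Spar (p \<noteq> q)"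
  unfolding ext_basic_def
  by (intro CDpar_sum, split if_split, intro conjI impI CDpar_fscale CDpar_Dpow F_CDpar CDpar_zero)

lemma ext_basic_eventually_zero: "eventually (\<lambda>n. ext_basic sc F a u n b v = 0) sequentially"
proof -
  obtain N where N: "\<And>n. n \<ge> N \<Longrightarrow> F n u v = 0"
    using F_eventually_zero by blast
  have "ext_basic sc F a u n b v = 0" if "n \<ge> N + a + b" for n
    unfolding ext_basic_def using that by (intro sum.neutral) (auto simp: N)
  then show ?thesis
    unfolding eventually_sequentially by blast
qed

lemma ext_prod_eq_sum:
  assumes "finite T" "finite T'" "{a. A a \<noteq> 0} \<subseteq> T" "{b. B b \<noteq> 0} \<subseteq> T'"
  shows "pr A n B = (\<Sum>a\<in>T. \<Sum>b\<in>T'. ext_basic sc F a (A a) n b (B b))"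
proof -
  have "pr A n B = (\<Sum>a\<in>T. \<Sum>b\<in>{b. B b \<noteq> 0}. ext_basic sc F a (A a) n b (B b))"
    unfolding ext_prod_def by (rule sum.mono_neutral_left) (use assms in auto)
  also have "\<dots> = (\<Sum>a\<in>T. \<Sum>b\<in>T'. ext_basic sc F a (A a) n b (B b))"
    by (intro sum.cong refl sum.mono_neutral_left) (use assms in auto)
  finally show ?thesis .
qed

lemma ext_prod_CDS [simp]: "pr A n B \<in> CDS"
  unfolding ext_prod_def by (simp add: ext_basic_def)

lemma ext_prod_CDpar: "A \<in> CDpar Spar p \<Longrightarrow> B \<in> CDpar Spar q \<Longrightarrow> pr A n B \<in> CDpar Spar (p \<noteq> q)"
  unfolding ext_prod_def by (intro CDpar_sum ext_basic_CDpar) (auto simp: CDpar_def)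

lemma ext_prod_eventually_zero:
  assumes "A \<in> CDS" "B \<in> CDS"
  shows "\<exists>N. \<forall>n\<ge>N. pr A n B = 0"
proof -
  have "eventually (\<lambda>n. \<forall>a\<in>{a. A a \<noteq> 0}. \<forall>b\<in>{b. B b \<noteq> 0}. ext_basic sc F a (A a) n b (B b) = 0) sequentially"
    using assms by (intro eventually_ball_finite ballI ext_basic_eventually_zero) (simp_all add: CDS_finite_support)
  then have "eventually (\<lambda>n. pr A n B = 0) sequentially"
    by (rule eventually_mono) (simp add: ext_prod_def)
  then show ?thesis unfolding eventually_sequentially .
qed

lemma ext_prod_add_left:
  assumes "A \<in> CDS" "A' \<in> CDS" "B \<in> CDS"
  shows "pr (A + A') n B = pr A n B + pr A' n B"
proof -
  let ?T = "{a. A a \<noteq> 0} \<union> {a. A' a \<noteq> 0}"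
  have fin: "finite ?T" "finite {b. B b \<noteq> 0}" using assms by (simp_all add: CDS_finite_support)
  show ?thesis
    by (subst (1 2 3) ext_prod_eq_sum[OF fin]) (auto simp: ext_basic_add_left sum.distrib)
qed

lemma ext_prod_add_right:
  assumes "A \<in> CDS" "B \<in> CDS" "B' \<in> CDS"
  shows "pr A n (B + B') = pr A n B + pr A n B'"
proof -
  let ?T = "{b. B b \<noteq> 0} \<union> {b. B' b \<noteq> 0}"
  have fin: "finite {a. A a \<noteq> 0}" "finite ?T" using assms by (simp_all add: CDS_finite_support)
  show ?thesis
    by (subst (1 2 3) ext_prod_eq_sum[OF fin]) (auto simp: ext_basic_add_right sum.distrib)
qed

lemma ext_prod_scale_left:
  assumes "A \<in> CDS" "B \<in> CDS"
  shows "pr (sm c A) n B = sm c (pr A n B)"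
proof -
  have fin: "finite {a. A a \<noteq> 0}" "finite {b. B b \<noteq> 0}" using assms by (simp_all add: CDS_finite_support)
  have "{a. sm c A a \<noteq> 0} \<subseteq> {a. A a \<noteq> 0}" by (auto simp: fscale_def)
  then show ?thesis
    by (simp add: ext_prod_eq_sum[OF fin] fscale_apply ext_basic_scale_left V.scale_sum_right)
qed

lemma ext_prod_scale_right:
  assumes "A \<in> CDS" "B \<in> CDS"
  shows "pr A n (sm c B) = sm c (pr A n B)"
proof -
  have fin: "finite {a. A a \<noteq> 0}" "finite {b. B b \<noteq> 0}" using assms by (simp_all add: CDS_finite_support)
  have "{b. sm c B b \<noteq> 0} \<subseteq> {b. B b \<noteq> 0}" by (auto simp: fscale_def)
  then show ?thesis
    by (simp add: ext_prod_eq_sum[OF fin] fscale_apply ext_basic_scale_right V.scale_sum_right)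
qed

lemma ext_prod_zero_left [simp]: "pr 0 n B = 0"
  by (simp add: ext_prod_def)

lemma ext_prod_zero_right [simp]: "pr A n 0 = 0"
  by (simp add: ext_prod_def)

lemma ext_prod_Dsh_left_expand:
  assumes "A \<in> CDS" "B \<in> CDS"
  shows "pr (Dsh A) n B = (\<Sum>a\<in>{a. A a \<noteq> 0}. \<Sum>b\<in>{b. B b \<noteq> 0}. ext_basic sc F (Suc a) (A a) n b (B b))"
proof -
  have fin: "finite (Suc ` {a. A a \<noteq> 0})" "finite {b. B b \<noteq> 0}"
    using assms by (simp_all add: CDS_finite_support)
  have "{a. Dsh A a \<noteq> 0} \<subseteq> Suc ` {a. A a \<noteq> 0}"
    by (auto simp: Dsh_def image_iff) (metis Suc_pred)
  then show ?thesis
    by (simp add: ext_prod_eq_sum[OF fin] sum.reindex Dsh_def)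
qed

lemma ext_prod_Dsh_right_expand:
  assumes "A \<in> CDS" "B \<in> CDS"
  shows "pr A n (Dsh B) = (\<Sum>a\<in>{a. A a \<noteq> 0}. \<Sum>b\<in>{b. B b \<noteq> 0}. ext_basic sc F a (A a) n (Suc b) (B b))"
proof -
  have fin: "finite {a. A a \<noteq> 0}" "finite (Suc ` {b. B b \<noteq> 0})"
    using assms by (simp_all add: CDS_finite_support)
  have "{b. Dsh B b \<noteq> 0} \<subseteq> Suc ` {b. B b \<noteq> 0}"
    by (auto simp: Dsh_def image_iff) (metis Suc_pred)
  then show ?thesis
    by (simp add: ext_prod_eq_sum[OF fin] sum.reindex Dsh_def)
qed

lemma ext_prod_Dsh_left:
  assumes "A \<in> CDS" "B \<in> CDS"
  shows "pr (Dsh A) n B = sm (- of_nat n) (pr A (n - 1) B)"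
  using assms
  by (simp add: ext_prod_Dsh_left_expand ext_prod_eq_sum[OF CDS_finite_support CDS_finite_support]
      ext_basic_Suc_left V.scale_sum_right)

lemma Dsh_ext_prod:
  assumes "A \<in> CDS" "B \<in> CDS"
  shows "Dsh (pr A n B) = pr (Dsh A) n B + pr A n (Dsh B)"
  using assms
  by (simp add: ext_prod_Dsh_left_expand ext_prod_Dsh_right_expand
      ext_prod_eq_sum[OF CDS_finite_support CDS_finite_support] Dsh_ext_basic Dsh_sum sum.distrib)

lemma ext_prod_Dsh_right:
  assumes "A \<in> CDS" "B \<in> CDS"
  shows "pr A n (Dsh B) = Dsh (pr A n B) + sm (of_nat n) (pr A (n - 1) B)"
  using assms by (simp add: Dsh_ext_prod ext_prod_Dsh_left)

definition jacobi_defect ::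
  "complex \<Rightarrow> (nat \<Rightarrow> 'a) \<Rightarrow> (nat \<Rightarrow> 'a) \<Rightarrow> (nat \<Rightarrow> 'a) \<Rightarrow> nat \<Rightarrow> nat \<Rightarrow> nat \<Rightarrow> 'a" where
  "jacobi_defect e A B C m n = pr A m (pr B n C) - sm e (pr B n (pr A m C))
     - (\<Sum>i\<le>m. sm (of_nat (m choose i)) (pr (pr A i B) (m + n - i) C))"

lemma jacobi_defect_Dsh_left:
  assumes h: "A \<in> CDS" "B \<in> CDS" "C \<in> CDS"
  shows "jacobi_defect e (Dsh A) B C m n = sm (- of_nat m) (jacobi_defect e A B C (m - 1) n)"
proof -
  have nested: "pr (Dsh A) m (pr B n C) = sm (- of_nat m) (pr A (m - 1) (pr B n C))"
    using h by (simp add: ext_prod_Dsh_left)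
  have swapped: "pr B n (pr (Dsh A) m C) = sm (- of_nat m) (pr B n (pr A (m - 1) C))"
    by (simp only: ext_prod_Dsh_left[OF h(1,3)] ext_prod_scale_right[OF h(2) ext_prod_CDS])
  have "(\<Sum>i\<le>m. sm (of_nat (m choose i)) (pr (pr (Dsh A) i B) (m + n - i) C))
     = - (\<Sum>i\<le>m. sm (of_nat (m choose i) * of_nat i) (pr (pr A (i - 1) B) (m + n - i) C))"
    unfolding sum_negf[symmetric]
    by (intro sum.cong refl)
      (simp only: ext_prod_Dsh_left[OF h(1,2)] ext_prod_scale_left[OF ext_prod_CDS h(3)] V.scale_scale,
        simp)
  also have "\<dots> = - sm (of_nat m) (\<Sum>j\<le>m - 1. sm (of_nat (m - 1 choose j)) (pr (pr A j B) (m + n - Suc j) C))"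
    by (simp only: V.sum_binomial_times_index diff_Suc_1)
  also have "\<dots> = - sm (of_nat m)
      (\<Sum>j\<le>m - 1. sm (of_nat (m - 1 choose j)) (pr (pr A j B) (m - 1 + n - j) C))"
    by (cases m) simp_all
  finally show ?thesis
    unfolding jacobi_defect_def nested swapped
    by (simp add: V.scale_right_diff_distrib V.scale_left_commute[of e])
qed

lemma ext_prod_ext_prod_Dsh_right:
  assumes h: "A \<in> CDS" "B \<in> CDS" "C \<in> CDS"
  shows "pr (pr A i (Dsh B)) k C =
    sm (- of_nat k) (pr (pr A i B) (k - 1) C) + sm (of_nat i) (pr (pr A (i - 1) B) k C)"
  by (simp only: ext_prod_Dsh_right[OF h(1,2)] ext_prod_add_left[OF CDS_Dsh[OF ext_prod_CDS]
      CDS_fscale[OF ext_prod_CDS] h(3)] ext_prod_Dsh_left[OF ext_prod_CDS h(3)]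
      ext_prod_scale_left[OF ext_prod_CDS h(3)])

lemma jacobi_defect_Dsh_middle:
  assumes h: "A \<in> CDS" "B \<in> CDS" "C \<in> CDS"
  shows "jacobi_defect e A (Dsh B) C m n = sm (- of_nat n) (jacobi_defect e A B C m (n - 1))"
proof -
  let ?Y = "\<lambda>i k. pr (pr A i B) k C"
  have nested: "pr A m (pr (Dsh B) n C) = sm (- of_nat n) (pr A m (pr B (n - 1) C))"
    by (simp only: ext_prod_Dsh_left[OF h(2,3)] ext_prod_scale_right[OF h(1) ext_prod_CDS])
  have swapped: "pr (Dsh B) n (pr A m C) = sm (- of_nat n) (pr B (n - 1) (pr A m C))"
    using h by (simp add: ext_prod_Dsh_left)
  have "(\<Sum>i\<le>m. sm (of_nat (m choose i)) (pr (pr A i (Dsh B)) (m + n - i) C))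
      = (\<Sum>i\<le>m. sm (- (of_nat (m choose i) * of_nat (m + n - i))) (?Y i (m + n - 1 - i)))
        + (\<Sum>i\<le>m. sm (of_nat (m choose i) * of_nat i) (?Y (i - 1) (m + n - i)))"
    unfolding sum.distrib[symmetric]
    by (intro sum.cong refl)
      (simp only: ext_prod_ext_prod_Dsh_right[OF h] V.scale_right_distrib V.scale_scale
        mult_minus_right diff_commute)
  also have "\<dots> = - (\<Sum>i\<le>m. sm (of_nat (m choose i) * of_nat (m + n - i)) (?Y i (m + n - 1 - i)))
        + sm (of_nat m) (\<Sum>j\<le>m - 1. sm (of_nat (m - 1 choose j)) (?Y j (m - 1 + n - j)))"
    by (cases m) (simp_all only: V.sum_binomial_times_index diff_Suc_1 V.scale_minus_left sum_negf, simp_all)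
  also have "\<dots> = - sm (of_nat n) (\<Sum>i\<le>m. sm (of_nat (m choose i)) (?Y i (m + n - 1 - i)))"
    unfolding V.sum_binomial_times_sum_index[of m n ?Y] by (simp add: algebra_simps)
  also have "\<dots> = - sm (of_nat n) (\<Sum>i\<le>m. sm (of_nat (m choose i)) (?Y i (m + (n - 1) - i)))"
    by (cases n) simp_all
  finally show ?thesis
    unfolding jacobi_defect_def nested swapped
    by (simp add: V.scale_right_diff_distrib V.scale_left_commute[of e])
qed

lemma jacobi_defect_Dsh_right:
  assumes h: "A \<in> CDS" "B \<in> CDS" "C \<in> CDS"
  shows "jacobi_defect e A B (Dsh C) m n = Dsh (jacobi_defect e A B C m n)
     + sm (of_nat m) (jacobi_defect e A B C (m - 1) n) + sm (of_nat n) (jacobi_defect e A B C m (n - 1))"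
proof -
  let ?Y = "\<lambda>i k. pr (pr A i B) k C"
  have nested: "pr A m (pr B n (Dsh C)) = Dsh (pr A m (pr B n C)) + sm (of_nat m) (pr A (m - 1) (pr B n C))
      + sm (of_nat n) (pr A m (pr B (n - 1) C))"
    by (simp only: ext_prod_Dsh_right[OF h(2,3)] ext_prod_add_right[OF h(1) CDS_Dsh[OF ext_prod_CDS]
        CDS_fscale[OF ext_prod_CDS]] ext_prod_Dsh_right[OF h(1) ext_prod_CDS] ext_prod_scale_right[OF h(1) ext_prod_CDS])
  have swapped: "pr B n (pr A m (Dsh C)) = Dsh (pr B n (pr A m C)) + sm (of_nat n) (pr B (n - 1) (pr A m C))
      + sm (of_nat m) (pr B n (pr A (m - 1) C))"
    by (simp only: ext_prod_Dsh_right[OF h(1,3)] ext_prod_add_right[OF h(2) CDS_Dsh[OF ext_prod_CDS]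
        CDS_fscale[OF ext_prod_CDS]] ext_prod_Dsh_right[OF h(2) ext_prod_CDS] ext_prod_scale_right[OF h(2) ext_prod_CDS])
  have "(\<Sum>i\<le>m. sm (of_nat (m choose i)) (pr (pr A i B) (m + n - i) (Dsh C)))
      = (\<Sum>i\<le>m. Dsh (sm (of_nat (m choose i)) (?Y i (m + n - i))))
        + (\<Sum>i\<le>m. sm (of_nat (m choose i) * of_nat (m + n - i)) (?Y i (m + n - 1 - i)))"
    unfolding sum.distrib[symmetric]
    by (intro sum.cong refl) (simp only: ext_prod_Dsh_right[OF ext_prod_CDS h(3)]
        V.scale_right_distrib V.scale_scale Dsh_fscale diff_commute)
  also have "\<dots> = Dsh (\<Sum>i\<le>m. sm (of_nat (m choose i)) (?Y i (m + n - i)))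
       + sm (of_nat m) (\<Sum>j\<le>m - 1. sm (of_nat (m - 1 choose j)) (?Y j (m - 1 + n - j)))
       + sm (of_nat n) (\<Sum>i\<le>m. sm (of_nat (m choose i)) (?Y i (m + n - 1 - i)))"
    by (simp only: V.sum_binomial_times_sum_index[of m n ?Y] Dsh_sum add.assoc)
  also have "sm (of_nat n) (\<Sum>i\<le>m. sm (of_nat (m choose i)) (?Y i (m + n - 1 - i)))
     = sm (of_nat n) (\<Sum>i\<le>m. sm (of_nat (m choose i)) (?Y i (m + (n - 1) - i)))"
    by (cases n) simp_all
  finally have iterated: "(\<Sum>i\<le>m. sm (of_nat (m choose i)) (pr (pr A i B) (m + n - i) (Dsh C)))
      = Dsh (\<Sum>i\<le>m. sm (of_nat (m choose i)) (?Y i (m + n - i)))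
       + sm (of_nat m) (\<Sum>j\<le>m - 1. sm (of_nat (m - 1 choose j)) (?Y j (m - 1 + n - j)))
       + sm (of_nat n) (\<Sum>i\<le>m. sm (of_nat (m choose i)) (?Y i (m + (n - 1) - i)))" .
  show ?thesis
    unfolding jacobi_defect_def nested swapped iterated Dsh_diff Dsh_fscale
    by (simp add: algebra_simps V.scale_right_diff_distrib V.scale_right_distrib V.scale_left_commute[of e])
qed

lemma jacobi_defect_add_left:
  assumes h: "A \<in> CDS" "A' \<in> CDS" "B \<in> CDS" "C \<in> CDS"
  shows "jacobi_defect e (A + A') B C m n = jacobi_defect e A B C m n + jacobi_defect e A' B C m n"
  unfolding jacobi_defect_def
  using h by (simp add: ext_prod_add_left ext_prod_add_right sum.distrib V.scale_right_distrib algebra_simps)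

lemma jacobi_defect_add_middle:
  assumes h: "A \<in> CDS" "B \<in> CDS" "B' \<in> CDS" "C \<in> CDS"
  shows "jacobi_defect e A (B + B') C m n = jacobi_defect e A B C m n + jacobi_defect e A B' C m n"
  unfolding jacobi_defect_def
  using h by (simp add: ext_prod_add_left ext_prod_add_right sum.distrib V.scale_right_distrib algebra_simps)

lemma jacobi_defect_add_right:
  assumes h: "A \<in> CDS" "B \<in> CDS" "C \<in> CDS" "C' \<in> CDS"
  shows "jacobi_defect e A B (C + C') m n = jacobi_defect e A B C m n + jacobi_defect e A B C' m n"
  unfolding jacobi_defect_def
  using h by (simp add: ext_prod_add_right sum.distrib V.scale_right_distrib algebra_simps)

lemma jacobi_defect_zero_left [simp]: "jacobi_defect e 0 B C m n = 0"
  by (simp add: jacobi_defect_def)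

lemma jacobi_defect_zero_middle [simp]: "jacobi_defect e A 0 C m n = 0"
  by (simp add: jacobi_defect_def)

lemma jacobi_defect_zero_right [simp]: "jacobi_defect e A B 0 m n = 0"
  by (simp add: jacobi_defect_def)

lemma jacobi_defect_Dpow_incl:
  assumes gen: "\<And>m n. jacobi_defect e (incl u) (incl v) (incl w) m n = 0"
  shows "jacobi_defect e (Dpow a (incl u)) (Dpow b (incl v)) (Dpow c (incl w)) m n = 0"
proof -
  have right: "jacobi_defect e (incl u) (incl v) (Dpow c (incl w)) m n = 0" for m n
    by (induction c arbitrary: m n) (simp_all add: gen Dpow_Suc jacobi_defect_Dsh_right)
  have middle: "jacobi_defect e (incl u) (Dpow b (incl v)) (Dpow c (incl w)) m n = 0" for m n
    by (induction b arbitrary: m n) (simp_all add: right Dpow_Suc jacobi_defect_Dsh_middle)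
  show ?thesis
    by (induction a arbitrary: m n) (simp_all add: middle Dpow_Suc jacobi_defect_Dsh_left)
qed

lemma jacobi_defect_eq_0_on_homogeneous:
  assumes gen: "\<And>u v w m n. u \<in> Spar p \<Longrightarrow> v \<in> Spar q \<Longrightarrow> w \<in> Spar r \<Longrightarrow>
      jacobi_defect e (incl u) (incl v) (incl w) m n = 0"
    and A: "A \<in> CDpar Spar p" and B: "B \<in> CDpar Spar q" and C: "C \<in> CDpar Spar r"
  shows "jacobi_defect e A B C m n = 0"
proof -
  have CDS: "A \<in> CDS" "B \<in> CDS" "C \<in> CDS"
    using A B C by (simp_all add: CDpar_def)
  have "jacobi_defect e (Dpow a (incl (A a))) (Dpow b (incl (B b))) (Dpow c (incl (C c))) m n = 0"
    for a b c m n
    using A B C by (intro jacobi_defect_Dpow_incl gen) (simp_all add: CDpar_def)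
  then have "jacobi_defect e (Dpow a (incl (A a))) (Dpow b (incl (B b))) C m n = 0" for a b m n
    by (intro additive_on_CDS_eq_0[where f = "\<lambda>C. jacobi_defect e _ _ C m n", OF _ _ CDS(3)])
      (simp_all add: jacobi_defect_add_right)
  then have "jacobi_defect e (Dpow a (incl (A a))) B C m n = 0" for a m n
    by (intro additive_on_CDS_eq_0[where f = "\<lambda>B. jacobi_defect e _ B C m n", OF _ _ CDS(2)])
      (simp_all add: jacobi_defect_add_middle CDS)
  then show ?thesis
    by (intro additive_on_CDS_eq_0[where f = "\<lambda>A. jacobi_defect e A B C m n", OF _ _ CDS(1)])
      (simp_all add: jacobi_defect_add_left CDS)
qed

definition half_jacobi :: "complex \<Rightarrow> (nat \<Rightarrow> 'a) \<Rightarrow> (nat \<Rightarrow> 'a) \<Rightarrow> (nat \<Rightarrow> 'a) \<Rightarrow> bool" where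
  "half_jacobi e A B C \<longleftrightarrow> (\<forall>k m n.
     (\<Sum>i\<le>k. sm ((-1) ^ i * of_nat (k choose i))
        (pr A (m + k - i) (pr B (n + i) C) - sm (e * (-1) ^ k) (pr B (n + k - i) (pr A (m + i) C))))
     = (\<Sum>i\<le>m. sm (of_nat (m choose i)) (pr (pr A (k + i) B) (m + n - i) C)))"

lemma half_jacobi_iff_jacobi_defect_eq_0:
  "half_jacobi e A B C \<longleftrightarrow> (\<forall>m n. jacobi_defect e A B C m n = 0)"
proof
  assume "half_jacobi e A B C"
  then show "\<forall>m n. jacobi_defect e A B C m n = 0"
    unfolding half_jacobi_def jacobi_defect_def by (auto dest: spec[of _ 0])
next
  assume "\<forall>m n. jacobi_defect e A B C m n = 0"
  then show "half_jacobi e A B C"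
    unfolding half_jacobi_def jacobi_defect_def
    by (intro allI V.half_jacobi_from_base_case) simp
qed

lemma VLA_SS_CDS_iff_half_jacobi:
  "VLA_SS sm CDS (CDpar Spar) Dsh pr \<longleftrightarrow>
   (\<forall>p q r. \<forall>A\<in>CDpar Spar p. \<forall>B\<in>CDpar Spar q. \<forall>C\<in>CDpar Spar r. half_jacobi (eps p q) A B C)"
proof -
  have "(\<exists>N. \<forall>n\<ge>N. pr A n B = 0) \<and> (\<forall>n. pr A n B \<in> CDpar Spar (p \<noteq> q)) \<and>
      (\<forall>n. pr (Dsh A) n B = sm (- of_nat n) (pr A (n - 1) B)) \<and>
      (\<forall>n. Dsh (pr A n B) = pr (Dsh A) n B + pr A n (Dsh B))"
    if "A \<in> CDpar Spar p" "B \<in> CDpar Spar q" for p q A B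
    using that ext_prod_CDpar[OF that] by (simp add: CDpar_def ext_prod_eventually_zero
        ext_prod_Dsh_left Dsh_ext_prod)
  then show ?thesis
    unfolding VLA_SS_def half_jacobi_def
    using graded_space_CDS by (auto simp: ext_prod_add_left ext_prod_add_right
        ext_prod_scale_left ext_prod_scale_right)
qed

end

theorem proposition7p7:
  fixes sc :: "complex \<Rightarrow> 'a::ab_group_add \<Rightarrow> 'a"
    and Spar :: "bool \<Rightarrow> 'a set"
    and F :: "nat \<Rightarrow> 'a \<Rightarrow> 'a \<Rightarrow> nat \<Rightarrow> 'a"
  assumes "is_formula sc Spar F"
  shows "VLA_SS (fscale sc) CDS (CDpar Spar) Dsh (ext_prod sc F) \<longleftrightarrow>
    (\<forall>p q r. \<forall>u\<in>Spar p. \<forall>v\<in>Spar q. \<forall>w\<in>Spar r. \<forall>m n.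
       ext_prod sc F (incl u) m (ext_prod sc F (incl v) n (incl w))
       - fscale sc (eps p q) (ext_prod sc F (incl v) n (ext_prod sc F (incl u) m (incl w)))
       = (\<Sum>i\<le>m. fscale sc (of_nat (m choose i))
            (ext_prod sc F (ext_prod sc F (incl u) i (incl v)) (m + n - i) (incl w))))"
proof -
  interpret formula sc Spar F
    using assms by (rule formula.intro)
  have "VLA_SS (fscale sc) CDS (CDpar Spar) Dsh (ext_prod sc F) \<longleftrightarrow>
      (\<forall>p q r. \<forall>A\<in>CDpar Spar p. \<forall>B\<in>CDpar Spar q. \<forall>C\<in>CDpar Spar r. \<forall>m n.
        jacobi_defect (eps p q) A B C m n = 0)"
    by (simp only: VLA_SS_CDS_iff_half_jacobi half_jacobi_iff_jacobi_defect_eq_0)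
  also have "\<dots> \<longleftrightarrow> (\<forall>p q r. \<forall>u\<in>Spar p. \<forall>v\<in>Spar q. \<forall>w\<in>Spar r. \<forall>m n.
      jacobi_defect (eps p q) (incl u) (incl v) (incl w) m n = 0)"
    using jacobi_defect_eq_0_on_homogeneous CDpar_incl by meson
  finally show ?thesis
    by (simp only: jacobi_defect_def diff_eq_eq add_0_left)
qed

end
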